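(* Let $W$ be an eventually periodic subset of $\mathbb{Z}^d$ with periods $u_1,\dots,u_d$, and let $\mathscr{W}_1,\mathcal{W}$ be as defined in the context. Suppose $\mathscr{W}_1$ contains exactly one element. Then $W$ has a minimal complement in $\mathbb{Z}^d$ if and only if there exists a nonempty finite subset $\mathcal{M}\subseteq\mathbb{Z}^d$ such that: (1) $\pi$ restricted to $\mathcal{M}$ is injective; (2) $\pi(\mathcal{M}+(\mathcal{W}\cup\mathscr{W}_1))=\mathbb{Z}^d/\mathcal{L}$; (3) for every $m\in\mathcal{M}$ there exists $w\in\mathscr{W}_1$ such that $m+w\not\equiv m'+w'\pmod{\mathcal{L}}$ for all $m'\in\mathcal{M}\setminus\{m\}$ and all $w'\in\mathcal{W}\cup\mathscr{W}_1$.
   Context: $d\geqslant1$, $\mathbb{N}=\{0,1,2,\dots\}$. Let $u_1,\dots,u_d\in\mathbb{Z}^d$ satisfy no nontrivial $\mathbb{Z}$-linear relation, $\mathcal{L}=\mathbb{Z}u_1+\dots+\mathbb{Z}u_d$, $P=\mathbb{N}u_1+\dots+\mathbb{N}u_d$, $\pi:\mathbb{Z}^d\to\mathbb{Z}^d/\mathcal{L}$ the quotient map. A nonempty $X\subseteq\mathbb{Z}^d$ is eventually periodic with periods $u_1,\dots,u_d$ if $X\subseteq F+P$ for some nonempty finite $F\subseteq\mathbb{Z}^d$ and $x+P\subseteq X$ for all but finitely many $x\in X$. For such $W$: $\mathscr{W}=\{w\in W:w+P\not\subseteq W\}$; $\mathcal{W}=\{w\in W\setminus\mathscr{W}:(w-P)\cap(W\setminus\mathscr{W})=\{w\}\}$;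 $\mathscr{W}_1$ is the set of elements of $\mathscr{W}$ congruent modulo $\mathcal{L}$ to no element of $\mathcal{W}$. A nonempty $M\subseteq\mathbb{Z}^d$ is a complement of $W$ if $M+W=\mathbb{Z}^d$, and a minimal complement if no proper subset of $M$ is a complement of $W$. *)

theory Defs
  imports "HOL-Analysis.Analysis" "HOL-Library.Set_Algebras"
begin

(* Z^d is rendered as int^'d for a finite index type 'd (so d = CARD('d) >= 1);
   the periods u_1..u_d are a family u :: 'd => int^'d. *)

definition no_int_relation :: "('d::finite \<Rightarrow> int^'d) \<Rightarrow> bool" where
  "no_int_relation u \<longleftrightarrow> (\<forall>c::'d \<Rightarrow> int. (\<Sum>i\<in>UNIV. c i *s u i) = 0 \<longrightarrow> (\<forall>i. c i = 0))"

definition lat :: "('d::finite \<Rightarrow> int^'d) \<Rightarrow> (int^'d) set" where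
  "lat u = {\<Sum>i\<in>UNIV. c i *s u i | c :: 'd \<Rightarrow> int. True}"

definition pcone :: "('d::finite \<Rightarrow> int^'d) \<Rightarrow> (int^'d) set" where
  "pcone u = {\<Sum>i\<in>UNIV. int (c i) *s u i | c :: 'd \<Rightarrow> nat. True}"

definition qmap :: "('d::finite \<Rightarrow> int^'d) \<Rightarrow> int^'d \<Rightarrow> (int^'d) set" where
  "qmap u x = {x} + lat u"

definition eventually_periodic :: "('d::finite \<Rightarrow> int^'d) \<Rightarrow> (int^'d) set \<Rightarrow> bool" where
  "eventually_periodic u X \<longleftrightarrow> X \<noteq> {} \<and>
     (\<exists>F. finite F \<and> F \<noteq> {} \<and> X \<subseteq> F + pcone u) \<and>
     finite {x \<in> X. \<not> ({x} + pcone u \<subseteq> X)}"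

definition Wscr :: "('d::finite \<Rightarrow> int^'d) \<Rightarrow> (int^'d) set \<Rightarrow> (int^'d) set" where
  "Wscr u W = {w \<in> W. \<not> ({w} + pcone u \<subseteq> W)}"

definition Wcal :: "('d::finite \<Rightarrow> int^'d) \<Rightarrow> (int^'d) set \<Rightarrow> (int^'d) set" where
  "Wcal u W = {w \<in> W - Wscr u W.
      {w - p | p. p \<in> pcone u} \<inter> (W - Wscr u W) = {w}}"

definition Wscr1 :: "('d::finite \<Rightarrow> int^'d) \<Rightarrow> (int^'d) set \<Rightarrow> (int^'d) set" where
  "Wscr1 u W = {w \<in> Wscr u W. \<forall>w' \<in> Wcal u W. w - w' \<notin> lat u}"

definition is_complement :: "(int^'d::finite) set \<Rightarrow> (int^'d) set \<Rightarrow> bool" where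
  "is_complement M W \<longleftrightarrow> M \<noteq> {} \<and> M + W = UNIV"

definition is_minimal_complement :: "(int^'d::finite) set \<Rightarrow> (int^'d) set \<Rightarrow> bool" where
  "is_minimal_complement M W \<longleftrightarrow> is_complement M W \<and> (\<forall>M'. M' \<subset> M \<longrightarrow> \<not> is_complement M' W)"

end

theory Submission
  imports Defs
begin

(* Put e = u_1 + ... + u_d and compare points of Z^d through the rational cone spanned by
   u_1, ..., u_d, which is full-dimensional because L has finite index. Let s be the unique
   element of Wscr1: it is the only element of W in its class mod L, and every other element of W
   is congruent to some w' in Wcal, above which W contains all of w' + P.

   Let M be a minimal complement. For each c, the points c - k e (k in N) lie in M + W; as W is
   covered by finitely many translates f + P, one f serves infinitely many k, and the
   corresponding elements of M lie in a single class mod L in which M is unbounded below and which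
   reaches c through W. In such a class, minimality yields an m with a point m + w represented only
   through m, and w = s is forced: if w were congruent to some w' in Wcal, an element m'' of M far
   below m in the class would give the second representation m'' + (w' + p). One such m per class
   gives the required set. Conversely, for a set with properties (1)-(3), the union of its classes
   is a complement in which every x is the only summand of x + s, so it is minimal. *)

lemma lat_iff: "x \<in> lat u \<longleftrightarrow> (\<exists>c. x = (\<Sum>i\<in>UNIV. c i *s u i))"
  unfolding lat_def by blast

lemma pcone_iff_nat: "x \<in> pcone u \<longleftrightarrow> (\<exists>c. x = (\<Sum>i\<in>UNIV. int (c i) *s u i))"
  unfolding pcone_def by blast

lemma lat_comb_mem [intro]: "(\<Sum>i\<in>UNIV. c i *s u i) \<in> lat u"
  unfolding lat_def by blast

lemma pcone_comb_mem [intro]: "(\<Sum>i\<in>UNIV. int (c i) *s u i) \<in> pcone u"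
  unfolding pcone_def by blast

lemma lat_zero: "0 \<in> lat u"
  unfolding lat_iff by (rule exI[of _ "\<lambda>_. 0"]) simp

lemma lat_add:
  assumes "x \<in> lat u" "y \<in> lat u" shows "x + y \<in> lat u"
proof -
  from assms obtain c c' where "x = (\<Sum>i\<in>UNIV. c i *s u i)" "y = (\<Sum>i\<in>UNIV. c' i *s u i)"
    by (auto simp: lat_iff)
  then have "x + y = (\<Sum>i\<in>UNIV. (c i + c' i) *s u i)"
    by (simp add: sum.distrib vector_sadd_rdistrib)
  then show ?thesis by (simp only: lat_comb_mem)
qed

lemma lat_diff:
  assumes "x \<in> lat u" "y \<in> lat u" shows "x - y \<in> lat u"
proof -
  from assms obtain c c' where "x = (\<Sum>i\<in>UNIV. c i *s u i)" "y = (\<Sum>i\<in>UNIV. c' i *s u i)"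
    by (auto simp: lat_iff)
  then have "x - y = (\<Sum>i\<in>UNIV. (c i - c' i) *s u i)"
    by (simp add: sum_subtractf vector_sub_rdistrib)
  then show ?thesis by (simp only: lat_comb_mem)
qed

lemma lat_smult:
  assumes "x \<in> lat u" shows "k *s x \<in> lat u"
proof -
  from assms obtain c where "x = (\<Sum>i\<in>UNIV. c i *s u i)"
    by (auto simp: lat_iff)
  then have "k *s x = (\<Sum>i\<in>UNIV. (k * c i) *s u i)"
    by (simp add: sum_cmul[symmetric] vector_smult_assoc)
  then show ?thesis by (simp only: lat_comb_mem)
qed

lemma lat_sum: "finite A \<Longrightarrow> (\<And>a. a \<in> A \<Longrightarrow> f a \<in> lat u) \<Longrightarrow> sum f A \<in> lat u"
  by (induction A rule: finite_induct) (auto intro: lat_add lat_zero)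

lemma pcone_subset_lat: "pcone u \<subseteq> lat u"
  by (auto simp: pcone_iff_nat)

lemma pcone_zero: "0 \<in> pcone u"
  unfolding pcone_iff_nat by (rule exI[of _ "\<lambda>_. 0"]) simp

lemma pcone_add:
  assumes "x \<in> pcone u" "y \<in> pcone u" shows "x + y \<in> pcone u"
proof -
  from assms obtain c c' where "x = (\<Sum>i\<in>UNIV. int (c i) *s u i)" "y = (\<Sum>i\<in>UNIV. int (c' i) *s u i)"
    by (auto simp: pcone_iff_nat)
  then have "x + y = (\<Sum>i\<in>UNIV. int (c i + c' i) *s u i)"
    by (simp add: sum.distrib vector_sadd_rdistrib)
  then show ?thesis by (simp only: pcone_comb_mem)
qed

lemma pcone_smult:
  assumes "x \<in> pcone u" shows "int k *s x \<in> pcone u"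
proof -
  from assms obtain c where "x = (\<Sum>i\<in>UNIV. int (c i) *s u i)"
    by (auto simp: pcone_iff_nat)
  then have "int k *s x = (\<Sum>i\<in>UNIV. int (k * c i) *s u i)"
    by (simp add: sum_cmul[symmetric] vector_smult_assoc)
  then show ?thesis by (simp only: pcone_comb_mem)
qed

lemma mem_qmap_iff: "m \<in> qmap u z \<longleftrightarrow> m - z \<in> lat u"
proof
  assume "m \<in> qmap u z"
  then obtain l where "l \<in> lat u" "m = z + l"
    unfolding qmap_def set_plus_def by blast
  then show "m - z \<in> lat u" by simp
next
  assume "m - z \<in> lat u"
  then have "m = z + (m - z) \<and> m - z \<in> lat u" by simp
  then show "m \<in> qmap u z"
    unfolding qmap_def set_plus_def by blast
qed

lemma qmap_eq_iff: "qmap u a = qmap u b \<longleftrightarrow> a - b \<in> lat u"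
proof
  assume "qmap u a = qmap u b"
  then show "a - b \<in> lat u"
    using mem_qmap_iff[of a u a] by (simp add: lat_zero mem_qmap_iff)
next
  assume ab: "a - b \<in> lat u"
  have "m - a \<in> lat u \<longleftrightarrow> m - b \<in> lat u" for m
    using lat_add[OF _ ab, of "m - a"] lat_diff[OF _ ab, of "m - b"] by auto
  then show "qmap u a = qmap u b" by (auto simp: mem_qmap_iff)
qed

definition gens_sum :: "('d::finite \<Rightarrow> int^'d) \<Rightarrow> int^'d" where
  "gens_sum u = (\<Sum>i\<in>UNIV. u i)"

lemma gens_sum_in_pcone: "gens_sum u \<in> pcone u"
  using pcone_comb_mem[of "\<lambda>_. 1" u] by (simp add: gens_sum_def)

definition qcone :: "('d::finite \<Rightarrow> int^'d) \<Rightarrow> (int^'d) set" where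
  "qcone u = {x. \<exists>n::int. n > 0 \<and> n *s x \<in> pcone u}"

lemma pcone_subset_qcone: "pcone u \<subseteq> qcone u"
  unfolding qcone_def by (auto intro: exI[of _ 1])

lemma qcone_add:
  assumes "x \<in> qcone u" "y \<in> qcone u"
  shows "x + y \<in> qcone u"
proof -
  obtain m n :: int where "m > 0" "m *s x \<in> pcone u" "n > 0" "n *s y \<in> pcone u"
    using assms unfolding qcone_def by blast
  have "(m * n) *s (x + y) = int (nat n) *s (m *s x) + int (nat m) *s (n *s y)"
    using \<open>m > 0\<close> \<open>n > 0\<close> by (simp add: vec_eq_iff algebra_simps)
  also have "\<dots> \<in> pcone u"
    using \<open>m *s x \<in> pcone u\<close> \<open>n *s y \<in> pcone u\<close> by (intro pcone_add pcone_smult)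
  finally have "m * n > 0 \<and> (m * n) *s (x + y) \<in> pcone u"
    using \<open>m > 0\<close> \<open>n > 0\<close> by simp
  then show ?thesis unfolding qcone_def by blast
qed

definition coinitial :: "('d::finite \<Rightarrow> int^'d) \<Rightarrow> (int^'d) set \<Rightarrow> bool" where
  "coinitial u S \<longleftrightarrow> (\<forall>y. \<exists>m\<in>S. y - m \<in> qcone u)"

definition rat_vec :: "int^'d::finite \<Rightarrow> rat^'d" where
  "rat_vec x = (\<chi> j. of_int (x $ j))"

lemma rat_vec_smult [simp]: "rat_vec (k *s x) = of_int k *s rat_vec x"
  and rat_vec_sum [simp]: "rat_vec (sum f A) = (\<Sum>i\<in>A. rat_vec (f i))"
  and rat_vec_zero [simp]: "rat_vec 0 = 0"
  and rat_vec_eq_iff [simp]: "rat_vec x = rat_vec y \<longleftrightarrow> x = y"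
  by (simp_all add: rat_vec_def vec_eq_iff)

lemma common_denominator:
  fixes q :: "'a \<Rightarrow> rat"
  assumes "finite A"
  shows "\<exists>n c. n > 0 \<and> (\<forall>i\<in>A. of_int (c i) = of_int n * q i)"
  using assms
proof (induction A rule: finite_induct)
  case empty
  show ?case by (rule exI[of _ 1]) simp
next
  case (insert a A)
  obtain n c where n: "n > 0" and c: "\<forall>i\<in>A. of_int (c i) = of_int n * q i"
    using insert.IH by blast
  obtain p d where "quotient_of (q a) = (p, d)" by fastforce
  then have "d > 0" and qa: "q a = of_int p / of_int d"
    by (simp_all add: quotient_of_denom_pos quotient_of_div)
  define c' where "c' i = (if i = a then n * p else d * c i)" for i
  have "\<forall>i\<in>insert a A. of_int (c' i) = of_int (n * d) * q i"
    using c \<open>d > 0\<close> by (auto simp: c'_def qa)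
  with n \<open>d > 0\<close> show ?case by (intro exI[of _ "n * d"] exI[of _ c']) simp
qed

lemma rat_vec_comb:
  fixes u :: "'d::finite \<Rightarrow> int^'d"
  assumes "\<forall>i. of_int (c i) = k * q i"
  shows "rat_vec (\<Sum>i\<in>UNIV. c i *s u i) = k *s (\<Sum>i\<in>UNIV. q i *s rat_vec (u i))"
  by (simp add: assms sum_cmul[symmetric] vector_smult_assoc)

lemma comb_delta:
  fixes u :: "'d::finite \<Rightarrow> int^'d"
  shows "(\<Sum>k\<in>UNIV. of_bool (k = i) *s u k) = u i"
proof -
  have "(\<Sum>k\<in>UNIV. of_bool (k = i) *s u k) = (\<Sum>k\<in>UNIV. if k = i then u k else 0)"
    by (rule sum.cong) auto
  then show ?thesis by simp
qed

locale int_basis =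
  fixes u :: "'d::finite \<Rightarrow> int^'d"
  assumes no_relation: "no_int_relation u"
begin

lemma comb_eq_0: "(\<Sum>i\<in>UNIV. c i *s u i) = 0 \<Longrightarrow> c i = 0"
  using no_relation unfolding no_int_relation_def by blast

lemma comb_inj:
  assumes "(\<Sum>i\<in>UNIV. c i *s u i) = (\<Sum>i\<in>UNIV. c' i *s u i)"
  shows "c = c'"
proof -
  have "(\<Sum>i\<in>UNIV. (c i - c' i) *s u i) = 0"
    using assms by (simp add: sum_subtractf vector_sub_rdistrib)
  then have "c i - c' i = 0" for i
    by (rule comb_eq_0[of "\<lambda>i. c i - c' i"])
  then show ?thesis by (simp add: fun_eq_iff)
qed

lemma inj_gens: "inj u"
proof (rule injI)
  fix i j assume "u i = u j"
  then have "(\<lambda>k. of_bool (k = i) :: int) = (\<lambda>k. of_bool (k = j))"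
    by (intro comb_inj) (simp add: comb_delta)
  then show "i = j" by (auto dest: fun_cong[of _ _ i])
qed

lemma inj_rat_gens: "inj (rat_vec \<circ> u)"
  using inj_gens by (simp add: inj_def)

lemma independent_rat_gens: "vec.independent (range (rat_vec \<circ> u))"
proof
  define v where "v = rat_vec \<circ> u"
  assume "vec.dependent (range v)"
  then obtain f where nz: "\<exists>y\<in>range v. f y \<noteq> 0" and "(\<Sum>y\<in>range v. f y *s y) = 0"
    using vec.dependent_finite[of "range v"] unfolding v_def by auto
  then have "(\<Sum>i\<in>UNIV. f (v i) *s v i) = 0"
    by (subst (asm) sum.reindex[OF inj_rat_gens[folded v_def]]) simp
  moreover obtain n c where "n > 0" and c: "\<forall>i. of_int (c i) = of_int n * f (v i)"
    using common_denominator[of UNIV "\<lambda>i. f (v i)"] by auto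
  ultimately have "(\<Sum>i\<in>UNIV. c i *s u i) = (\<Sum>i\<in>UNIV. 0 *s u i)"
    using rat_vec_comb[OF c, of u] by (simp add: v_def flip: rat_vec_eq_iff)
  then have "c = (\<lambda>_. 0)" by (rule comb_inj)
  with c \<open>n > 0\<close> nz show False by auto
qed

lemma multiple_in_lat: "\<exists>n::int. n > 0 \<and> n *s x \<in> lat u"
proof -
  define v where "v = rat_vec \<circ> u"
  have "card (range v) = CARD('d)"
    unfolding v_def by (rule card_image[OF inj_rat_gens])
  then have "card (range v) = vec.dim (UNIV :: (rat^'d) set)"
    by (simp only: vec_dim_card)
  then have "UNIV \<subseteq> vec.span (range v)"
    using vec.card_eq_dim[of "range v" UNIV] independent_rat_gens by (simp add: v_def)
  then obtain f where "rat_vec x = (\<Sum>y\<in>range v. f y *s y)"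
    using vec.span_finite[of "range v"] by auto
  then have x: "rat_vec x = (\<Sum>i\<in>UNIV. f (v i) *s v i)"
    by (simp add: sum.reindex[OF inj_rat_gens[folded v_def]])
  obtain n c where "n > 0" and c: "\<forall>i. of_int (c i) = of_int n * f (v i)"
    using common_denominator[of UNIV "\<lambda>i. f (v i)"] by auto
  have "(\<Sum>i\<in>UNIV. c i *s u i) = n *s x"
    using rat_vec_comb[OF c, of u] by (simp add: v_def x flip: rat_vec_eq_iff)
  with \<open>n > 0\<close> show ?thesis by (metis lat_comb_mem)
qed

definition coord :: "int^'d \<Rightarrow> 'd \<Rightarrow> int" where
  "coord x = (THE c. x = (\<Sum>i\<in>UNIV. c i *s u i))"

lemma coord_comb [simp]: "coord (\<Sum>i\<in>UNIV. c i *s u i) = c"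
  unfolding coord_def by (rule the_equality) (auto dest: comb_inj)

lemma comb_coord: "x \<in> lat u \<Longrightarrow> (\<Sum>i\<in>UNIV. coord x i *s u i) = x"
  by (auto simp: lat_iff)

lemma coord_add:
  assumes "x \<in> lat u" "y \<in> lat u"
  shows "coord (x + y) i = coord x i + coord y i"
proof -
  have "x + y = (\<Sum>i\<in>UNIV. (coord x i + coord y i) *s u i)"
    using assms by (simp add: comb_coord sum.distrib vector_sadd_rdistrib)
  then show ?thesis by (metis coord_comb)
qed

lemma coord_smult:
  assumes "x \<in> lat u"
  shows "coord (k *s x) i = k * coord x i"
proof -
  have "k *s x = k *s (\<Sum>i\<in>UNIV. coord x i *s u i)"
    using assms by (simp add: comb_coord)
  also have "\<dots> = (\<Sum>i\<in>UNIV. (k * coord x i) *s u i)"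
    by (simp add: sum_cmul[symmetric] vector_smult_assoc)
  finally show ?thesis by (metis coord_comb)
qed

lemma pcone_iff_coord: "x \<in> pcone u \<longleftrightarrow> x \<in> lat u \<and> (\<forall>i. 0 \<le> coord x i)"
proof
  assume "x \<in> pcone u"
  then obtain c where "x = (\<Sum>i\<in>UNIV. int (c i) *s u i)" by (auto simp: pcone_iff_nat)
  then show "x \<in> lat u \<and> (\<forall>i. 0 \<le> coord x i)" by auto
next
  assume x: "x \<in> lat u \<and> (\<forall>i. 0 \<le> coord x i)"
  then have "x = (\<Sum>i\<in>UNIV. int (nat (coord x i)) *s u i)"
    by (simp add: comb_coord)
  then show "x \<in> pcone u" by (metis pcone_comb_mem)
qed

lemma lat_inter_qcone: "lat u \<inter> qcone u = pcone u"
proof (intro equalityI subsetI)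
  fix x assume x: "x \<in> lat u \<inter> qcone u"
  then obtain n :: int where "n > 0" "n *s x \<in> pcone u"
    unfolding qcone_def by blast
  then have "0 \<le> n * coord x i" for i
    using x by (simp add: pcone_iff_coord coord_smult)
  with \<open>n > 0\<close> x show "x \<in> pcone u"
    by (simp add: pcone_iff_coord zero_le_mult_iff)
qed (use pcone_subset_lat pcone_subset_qcone in blast)

lemma neg_gens_sum_notin_qcone: "- gens_sum u \<notin> qcone u"
proof
  assume "- gens_sum u \<in> qcone u"
  then obtain n :: int where "n > 0" "n *s (- gens_sum u) \<in> pcone u"
    unfolding qcone_def by blast
  moreover have "n *s (- gens_sum u) = (\<Sum>i\<in>UNIV. (- n) *s u i)"
    by (simp add: gens_sum_def sum_cmul[symmetric] vector_smult_lneg sum_negf)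
  ultimately have "\<forall>i. 0 \<le> coord (\<Sum>i\<in>UNIV. (- n) *s u i) i"
    unfolding pcone_iff_coord by simp
  then have "0 \<le> - n" by simp
  with \<open>n > 0\<close> show False by simp
qed

lemma eventually_shift_in_qcone: "\<forall>\<^sub>F K in sequentially. x + int K *s gens_sum u \<in> qcone u"
proof -
  obtain n c where "n > 0" and c: "n *s x = (\<Sum>i\<in>UNIV. c i *s u i)"
    using multiple_in_lat[of x] by (auto simp: lat_iff)
  define N where "N = nat (\<Sum>i\<in>UNIV. \<bar>c i\<bar>)"
  have "x + int K *s gens_sum u \<in> qcone u" if "N \<le> K" for K
  proof -
    have c_le: "\<bar>c i\<bar> \<le> int K" for i
      using member_le_sum[of i UNIV "\<lambda>i. \<bar>c i\<bar>"] \<open>N \<le> K\<close> by (simp add: N_def)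
    have "int K \<le> n * int K"
      using \<open>n > 0\<close> by (simp add: mult_le_cancel_right1)
    then have nonneg: "0 \<le> c i + n * int K" for i
      using c_le[of i] abs_le_iff[of "c i" "int K"] by linarith
    have "n *s (x + int K *s gens_sum u) = (\<Sum>i\<in>UNIV. (c i + n * int K) *s u i)"
      by (simp add: c gens_sum_def vector_add_ldistrib vector_sadd_rdistrib sum.distrib
          sum_cmul[symmetric] vector_smult_assoc)
    also have "\<dots> = (\<Sum>i\<in>UNIV. int (nat (c i + n * int K)) *s u i)"
      using nonneg by simp
    also have "\<dots> \<in> pcone u"
      by (rule pcone_comb_mem)
    finally have "n *s (x + int K *s gens_sum u) \<in> pcone u" .
    with \<open>n > 0\<close> show ?thesis unfolding qcone_def by blast
  qed
  then show ?thesis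
    unfolding eventually_sequentially by blast
qed

lemma coinitial_other:
  assumes "coinitial u S"
  shows "\<exists>m\<in>S. m \<noteq> m0 \<and> x - m \<in> qcone u"
proof -
  have "\<forall>\<^sub>F K in sequentially. x + int K *s gens_sum u \<in> qcone u
      \<and> (m0 - gens_sum u) + int K *s gens_sum u \<in> qcone u"
    by (intro eventually_conj eventually_shift_in_qcone)
  then obtain K where K: "x + int K *s gens_sum u \<in> qcone u"
    "(m0 - gens_sum u) + int K *s gens_sum u \<in> qcone u"
    unfolding eventually_sequentially by (meson order_refl)
  obtain m where "m \<in> S" and m: "- (int K *s gens_sum u) - m \<in> qcone u"
    using assms unfolding coinitial_def by blast
  have "x - m = (x + int K *s gens_sum u) + (- (int K *s gens_sum u) - m)"
    by simp
  then have "x - m \<in> qcone u"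
    using qcone_add[OF K(1) m] by simp
  moreover have "m \<noteq> m0"
  proof
    assume "m = m0"
    then have "- gens_sum u = ((m0 - gens_sum u) + int K *s gens_sum u) + (- (int K *s gens_sum u) - m)"
      by simp
    then show False
      using qcone_add[OF K(2) m] neg_gens_sum_notin_qcone by simp
  qed
  ultimately show ?thesis using \<open>m \<in> S\<close> by blast
qed

lemma coinitial_of_descending:
  assumes "infinite K" and below: "\<And>k. k \<in> K \<Longrightarrow> b - int k *s gens_sum u - m k \<in> pcone u"
  shows "coinitial u (m ` K)"
  unfolding coinitial_def
proof
  fix y
  have "\<exists>\<^sub>F k in sequentially. k \<in> K"
    using assms(1) by (simp add: frequently_cofinite flip: cofinite_eq_sequentially)
  then obtain k where "k \<in> K" and k: "(y - b) + int k *s gens_sum u \<in> qcone u"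
    using frequently_eventually_frequently[OF _ eventually_shift_in_qcone]
    by (metis (mono_tags, lifting) frequentlyE)
  have "y - m k = ((y - b) + int k *s gens_sum u) + (b - int k *s gens_sum u - m k)"
    by simp
  also have "\<dots> \<in> qcone u"
    using k below[OF \<open>k \<in> K\<close>] pcone_subset_qcone by (blast intro: qcone_add)
  finally show "\<exists>m'\<in>m ` K. y - m' \<in> qcone u"
    using \<open>k \<in> K\<close> by blast
qed

lemma finite_pcone_interval: "finite {p \<in> pcone u. y - p \<in> pcone u}"
proof (rule finite_subset)
  show "{p \<in> pcone u. y - p \<in> pcone u}
      \<subseteq> (\<lambda>c. \<Sum>i\<in>UNIV. c i *s u i) ` PiE UNIV (\<lambda>i. {0..coord y i})"
  proof
    fix p assume p: "p \<in> {p \<in> pcone u. y - p \<in> pcone u}"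
    then have "coord y i = coord p i + coord (y - p) i" for i
      using coord_add[of p "y - p" i] pcone_subset_lat by auto
    with p have "coord p \<in> PiE UNIV (\<lambda>i. {0..coord y i})"
      by (auto simp: pcone_iff_coord)
    moreover have "p \<in> lat u"
      using p pcone_subset_lat by blast
    then have "p = (\<Sum>i\<in>UNIV. coord p i *s u i)"
      by (simp add: comb_coord)
    ultimately show "p \<in> (\<lambda>c. \<Sum>i\<in>UNIV. c i *s u i) ` PiE UNIV (\<lambda>i. {0..coord y i})"
      by blast
  qed
qed (simp add: finite_PiE)

lemma finite_pcone_has_maximal:
  assumes "finite T" "p0 \<in> T" "T \<subseteq> pcone u"
  shows "\<exists>p\<in>T. \<forall>q\<in>pcone u. p + q \<in> T \<longrightarrow> q = 0"
proof -
  define height where "height p = (\<Sum>i\<in>UNIV. coord p i)" for p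
  have "Max (height ` T) \<in> height ` T"
    using assms(1,2) by (intro Max_in) auto
  then obtain p where "p \<in> T" and p: "height p = Max (height ` T)"
    by auto
  have p_max: "height p' \<le> height p" if "p' \<in> T" for p'
    using assms(1) that by (simp add: p)
  have "q = 0" if q: "q \<in> pcone u" "p + q \<in> T" for q
  proof -
    have "p \<in> lat u" "q \<in> lat u"
      using \<open>p \<in> T\<close> q assms(3) pcone_subset_lat by auto
    then have "height (p + q) = height p + height q"
      by (simp add: height_def coord_add sum.distrib)
    moreover have "height (p + q) \<le> height p"
      using p_max q(2) .
    ultimately have "height q \<le> 0" by simp
    moreover have nonneg: "\<forall>i. 0 \<le> coord q i"
      using q(1) by (simp add: pcone_iff_coord)
    then have "0 \<le> height q"
      unfolding height_def by (simp add: sum_nonneg)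
    ultimately have "height q = 0" by simp
    then have "\<forall>i. coord q i = 0"
      using sum_nonneg_eq_0_iff[of UNIV "coord q"] nonneg by (simp add: height_def)
    then show "q = 0"
      using comb_coord[OF \<open>q \<in> lat u\<close>] by simp
  qed
  with \<open>p \<in> T\<close> show ?thesis by blast
qed

lemma uniform_multiple_in_lat: "\<exists>D::int. D > 0 \<and> (\<forall>x. D *s x \<in> lat u)"
proof -
  have "\<forall>j. \<exists>n::int. n > 0 \<and> n *s axis j 1 \<in> lat u"
    using multiple_in_lat by blast
  then obtain n where n: "\<And>j. n j > 0" "\<And>j. n j *s axis j 1 \<in> lat u"
    by metis
  define D where "D = (\<Prod>j\<in>UNIV. n j)"
  have D_axis: "D *s axis j 1 \<in> lat u" for j
  proof -
    have "n j dvd D" unfolding D_def by (rule dvd_prodI) auto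
    then have "D *s axis j 1 = (D div n j) *s (n j *s axis j 1)"
      by (simp add: vector_smult_assoc)
    then show ?thesis using n(2) lat_smult by metis
  qed
  have "D *s x \<in> lat u" for x
  proof -
    have "D *s x = (\<Sum>j\<in>UNIV. x $ j *s (D *s axis j 1))"
      by (subst (1) basis_expansion[of x, symmetric])
        (simp add: sum_cmul[symmetric] vector_smult_assoc mult.commute)
    also have "\<dots> \<in> lat u"
      by (intro lat_sum lat_smult[OF D_axis]) simp
    finally show ?thesis .
  qed
  moreover have "D > 0" unfolding D_def using n(1) by (simp add: prod_pos)
  ultimately show ?thesis by blast
qed

lemma finite_range_qmap: "finite (range (qmap u))"
proof -
  obtain D :: int where "D > 0" and D: "\<And>x. D *s x \<in> lat u"
    using uniform_multiple_in_lat by blast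
  have "range (qmap u) \<subseteq> qmap u ` vec_lambda ` PiE UNIV (\<lambda>_. {0..<D})"
  proof
    fix A assume "A \<in> range (qmap u)"
    then obtain z where z: "A = qmap u z" by blast
    have "z - (\<chi> j. z $ j mod D) = D *s (\<chi> j. z $ j div D)"
      by (simp add: vec_eq_iff minus_mod_eq_mult_div)
    then have "z - (\<chi> j. z $ j mod D) \<in> lat u"
      by (simp only: D)
    then have "A = qmap u (\<chi> j. z $ j mod D)"
      using z by (simp add: qmap_eq_iff)
    moreover have "(\<lambda>j. z $ j mod D) \<in> PiE UNIV (\<lambda>_. {0..<D})"
      using \<open>D > 0\<close> by (simp add: PiE_iff)
    ultimately show "A \<in> qmap u ` vec_lambda ` PiE UNIV (\<lambda>_. {0..<D})"
      by blast
  qed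
  then show ?thesis
    by (rule finite_subset) (intro finite_imageI finite_PiE; simp)
qed

end

definition sole_summand :: "(int^'d::finite) set \<Rightarrow> (int^'d) set \<Rightarrow> int^'d \<Rightarrow> int^'d \<Rightarrow> bool" where
  "sole_summand M W m x \<longleftrightarrow> x - m \<in> W \<and> (\<forall>m'\<in>M. m' \<noteq> m \<longrightarrow> x - m' \<notin> W)"

(* The second element m' is needed because the empty set is never a complement. *)
lemma minimal_complement_sole_summand:
  assumes M: "is_minimal_complement M W" and "m \<in> M" "m' \<in> M" "m' \<noteq> m"
  shows "\<exists>x. sole_summand M W m x"
proof -
  have "\<not> is_complement (M - {m}) W"
    using M \<open>m \<in> M\<close> unfolding is_minimal_complement_def by blast
  moreover have "M - {m} \<noteq> {}"
    using \<open>m' \<in> M\<close> \<open>m' \<noteq> m\<close> by blast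
  ultimately obtain x where x: "x \<notin> (M - {m}) + W"
    unfolding is_complement_def by auto
  have "x \<in> M + W"
    using M unfolding is_minimal_complement_def is_complement_def by simp
  then obtain a where "a \<in> M" "x - a \<in> W"
    unfolding set_plus_def by force
  moreover have "x - a' \<notin> W" if "a' \<in> M" "a' \<noteq> m" for a'
    using x that unfolding set_plus_def by force
  ultimately show ?thesis
    unfolding sole_summand_def by metis
qed

lemma minimal_complement_if_sole_summands:
  assumes M: "is_complement M W" and sole: "\<forall>m\<in>M. \<exists>x. sole_summand M W m x"
  shows "is_minimal_complement M W"
  unfolding is_minimal_complement_def
proof (intro conjI allI impI M notI)
  fix M' assume "M' \<subset> M" "is_complement M' W"
  then obtain m where "m \<in> M" "m \<notin> M'" by blast
  with sole obtain x where x: "sole_summand M W m x" by blast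
  have "x \<in> M' + W"
    using \<open>is_complement M' W\<close> unfolding is_complement_def by simp
  then obtain a where "a \<in> M'" "x - a \<in> W"
    unfolding set_plus_def by force
  moreover have "a \<in> M" "a \<noteq> m"
    using \<open>a \<in> M'\<close> \<open>M' \<subset> M\<close> \<open>m \<notin> M'\<close> by auto
  ultimately show False
    using x unfolding sole_summand_def by blast
qed

locale eventually_periodic_set = int_basis u for u :: "'d::finite \<Rightarrow> int^'d" +
  fixes W :: "(int^'d) set"
  assumes eventually_periodic: "eventually_periodic u W"
begin

abbreviation Wrep :: "(int^'d) set" where
  "Wrep \<equiv> Wcal u W \<union> Wscr1 u W"

lemma Wrep_subset: "Wrep \<subseteq> W"
  unfolding Wcal_def Wscr1_def Wscr_def by blast

lemma Wcal_add_pcone: "w \<in> Wcal u W \<Longrightarrow> p \<in> pcone u \<Longrightarrow> w + p \<in> W"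
  unfolding Wcal_def Wscr_def set_plus_def by blast

lemma finite_pcone_below: "finite {p \<in> pcone u. w - p \<in> W}"
proof -
  obtain F where "finite F" and F: "W \<subseteq> F + pcone u"
    using eventually_periodic unfolding eventually_periodic_def by blast
  have "{p \<in> pcone u. w - p \<in> W} \<subseteq> (\<Union>f\<in>F. {p \<in> pcone u. (w - f) - p \<in> pcone u})"
  proof
    fix p assume p: "p \<in> {p \<in> pcone u. w - p \<in> W}"
    then obtain f q where "f \<in> F" "q \<in> pcone u" "w - p = f + q"
      using F unfolding set_plus_def by blast
    moreover have "(w - f) - p = q"
      using \<open>w - p = f + q\<close> by (simp add: algebra_simps)
    ultimately show "p \<in> (\<Union>f\<in>F. {p \<in> pcone u. (w - f) - p \<in> pcone u})"
      using p by auto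
  qed
  then show ?thesis
    using \<open>finite F\<close> finite_pcone_interval by (meson finite_UN_I finite_subset)
qed

lemma exists_Wcal_below:
  assumes "w \<in> W" "w \<notin> Wscr u W"
  shows "\<exists>w0\<in>Wcal u W. w - w0 \<in> pcone u"
proof -
  define T where "T = {p \<in> pcone u. w - p \<in> W - Wscr u W}"
  have "finite T"
    unfolding T_def by (rule finite_subset[OF _ finite_pcone_below[of w]]) blast
  moreover have "0 \<in> T"
    using assms pcone_zero unfolding T_def by simp
  ultimately obtain p where "p \<in> T" and p_max: "\<forall>q\<in>pcone u. p + q \<in> T \<longrightarrow> q = 0"
    using finite_pcone_has_maximal[of T] unfolding T_def by blast
  have "{w - p - q | q. q \<in> pcone u} \<inter> (W - Wscr u W) = {w - p}"
  proof (intro equalityI subsetI)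
    fix z assume "z \<in> {w - p - q | q. q \<in> pcone u} \<inter> (W - Wscr u W)"
    then obtain q where "q \<in> pcone u" "z = w - (p + q)" "z \<in> W - Wscr u W"
      by (auto simp: algebra_simps)
    moreover have "p + q \<in> pcone u"
      using \<open>p \<in> T\<close> \<open>q \<in> pcone u\<close> pcone_add unfolding T_def by blast
    ultimately have "q = 0"
      using p_max unfolding T_def by simp
    with \<open>z = w - (p + q)\<close> show "z \<in> {w - p}" by simp
  next
    fix z assume "z \<in> {w - p}"
    then show "z \<in> {w - p - q | q. q \<in> pcone u} \<inter> (W - Wscr u W)"
      using \<open>p \<in> T\<close> pcone_zero unfolding T_def by force
  qed
  then have "w - p \<in> Wcal u W"
    using \<open>p \<in> T\<close> unfolding Wcal_def T_def by blast
  moreover have "w - (w - p) \<in> pcone u"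
    using \<open>p \<in> T\<close> unfolding T_def by simp
  ultimately show ?thesis by blast
qed

lemma exists_congruent_rep:
  assumes "w \<in> W"
  shows "\<exists>w'\<in>Wrep. w - w' \<in> lat u"
proof -
  consider "w \<in> Wscr1 u W" | "w \<in> Wscr u W - Wscr1 u W" | "w \<notin> Wscr u W"
    by blast
  then show ?thesis
  proof cases
    case 1
    then show ?thesis using lat_zero[of u] by force
  next
    case 2
    then show ?thesis unfolding Wscr1_def by blast
  next
    case 3
    then show ?thesis
      using exists_Wcal_below[OF assms] pcone_subset_lat by blast
  qed
qed

lemma exists_other_summand:
  assumes "w \<in> Wcal u W" "coinitial u (M \<inter> qmap u z)" "x - w - z \<in> lat u"
  shows "\<exists>m\<in>M. m \<noteq> m0 \<and> x - m \<in> W"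
proof -
  obtain m where "m \<in> M \<inter> qmap u z" "m \<noteq> m0" and "x - w - m \<in> qcone u"
    using coinitial_other[OF assms(2)] by blast
  have "m - z \<in> lat u"
    using \<open>m \<in> M \<inter> qmap u z\<close> by (simp add: mem_qmap_iff)
  have "x - w - m = (x - w - z) - (m - z)" by simp
  also have "\<dots> \<in> lat u"
    using assms(3) \<open>m - z \<in> lat u\<close> by (rule lat_diff)
  finally have "x - w - m \<in> pcone u"
    using \<open>x - w - m \<in> qcone u\<close> lat_inter_qcone by blast
  then have "w + (x - w - m) \<in> W"
    by (rule Wcal_add_pcone[OF assms(1)])
  then show ?thesis
    using \<open>m \<in> M \<inter> qmap u z\<close> \<open>m \<noteq> m0\<close> by (auto simp: algebra_simps)
qed

lemma complement_ray_decomposition: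
  assumes "is_complement M W"
  obtains f K mk qk where "infinite K"
    and "\<And>k. k \<in> K \<Longrightarrow> mk k \<in> M" "\<And>k. k \<in> K \<Longrightarrow> qk k \<in> pcone u"
    and "\<And>k. k \<in> K \<Longrightarrow> f + qk k \<in> W"
    and "\<And>k. k \<in> K \<Longrightarrow> c - int k *s gens_sum u = mk k + (f + qk k)"
proof -
  obtain F where "finite F" and F: "W \<subseteq> F + pcone u"
    using eventually_periodic unfolding eventually_periodic_def by blast
  have "\<exists>m f q. m \<in> M \<and> f \<in> F \<and> q \<in> pcone u \<and> f + q \<in> W \<and> c - int k *s gens_sum u = m + (f + q)"
    for k :: nat
  proof -
    obtain m w where "m \<in> M" "w \<in> W" "c - int k *s gens_sum u = m + w"
      using assms unfolding is_complement_def set_plus_def by blast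
    moreover obtain f q where "f \<in> F" "q \<in> pcone u" "w = f + q"
      using F \<open>w \<in> W\<close> unfolding set_plus_def by blast
    ultimately show ?thesis by blast
  qed
  then obtain mk fk qk where mk: "\<And>k. mk k \<in> M" and fk: "\<And>k. fk k \<in> F"
    and qk: "\<And>k. qk k \<in> pcone u" and wk: "\<And>k. fk k + qk k \<in> W"
    and decomp: "\<And>k. c - int k *s gens_sum u = mk k + (fk k + qk k)"
    by metis
  have "finite (range fk)"
    using \<open>finite F\<close> fk by (meson finite_subset image_subsetI)
  then obtain k0 where K: "infinite {k. fk k = fk k0}"
    using pigeonhole_infinite[of UNIV fk] by auto
  show ?thesis
  proof (rule that[OF K])
    fix k assume "k \<in> {k. fk k = fk k0}"
    then have "fk k = fk k0" by simp
    then show "mk k \<in> M" "qk k \<in> pcone u" "fk k0 + qk k \<in> W"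
      "c - int k *s gens_sum u = mk k + (fk k0 + qk k)"
      using mk qk wk decomp by metis+
  qed
qed

lemma complement_coinitial_class:
  assumes "is_complement M W"
  shows "\<exists>m\<in>M. \<exists>w'\<in>Wrep. coinitial u (M \<inter> qmap u m) \<and> c - m - w' \<in> lat u"
proof -
  obtain f K mk qk where "infinite K" and mk: "\<And>k. k \<in> K \<Longrightarrow> mk k \<in> M"
    and qk: "\<And>k. k \<in> K \<Longrightarrow> qk k \<in> pcone u" and wk: "\<And>k. k \<in> K \<Longrightarrow> f + qk k \<in> W"
    and decomp: "\<And>k. k \<in> K \<Longrightarrow> c - int k *s gens_sum u = mk k + (f + qk k)"
    using complement_ray_decomposition[OF assms] by metis
  then obtain k0 where "k0 \<in> K"
    by (metis finite.emptyI ex_in_conv)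
  have below: "(c - f) - int k *s gens_sum u - mk k = qk k" if "k \<in> K" for k
    using decomp[OF that] by (simp add: algebra_simps)
  have "coinitial u (mk ` K)"
    using \<open>infinite K\<close> below qk by (intro coinitial_of_descending[where b = "c - f"]) auto
  moreover have "mk ` K \<subseteq> M \<inter> qmap u (mk k0)"
  proof (intro subsetI, elim imageE)
    fix m k assume "m = mk k" "k \<in> K"
    have "gens_sum u \<in> lat u" "qk k0 \<in> lat u" "qk k \<in> lat u"
      using gens_sum_in_pcone qk \<open>k \<in> K\<close> \<open>k0 \<in> K\<close> pcone_subset_lat by blast+
    then have "(int k0 - int k) *s gens_sum u + (qk k0 - qk k) \<in> lat u"
      by (intro lat_add lat_smult lat_diff)
    moreover have "mk k - mk k0 = (int k0 - int k) *s gens_sum u + (qk k0 - qk k)"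
      using below[OF \<open>k \<in> K\<close>] below[OF \<open>k0 \<in> K\<close>] by (simp add: algebra_simps vector_sub_rdistrib)
    ultimately show "m \<in> M \<inter> qmap u (mk k0)"
      using mk[OF \<open>k \<in> K\<close>] \<open>m = mk k\<close> by (simp add: mem_qmap_iff)
  qed
  ultimately have "coinitial u (M \<inter> qmap u (mk k0))"
    unfolding coinitial_def by blast
  obtain w' where "w' \<in> Wrep" and "(f + qk k0) - w' \<in> lat u"
    using exists_congruent_rep[OF wk[OF \<open>k0 \<in> K\<close>]] by blast
  have "c - mk k0 - w' = int k0 *s gens_sum u + ((f + qk k0) - w')"
    using decomp[OF \<open>k0 \<in> K\<close>] by (simp add: algebra_simps)
  also have "\<dots> \<in> lat u"
    using gens_sum_in_pcone pcone_subset_lat \<open>(f + qk k0) - w' \<in> lat u\<close>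
    by (blast intro: lat_add lat_smult)
  finally show ?thesis
    using mk[OF \<open>k0 \<in> K\<close>] \<open>w' \<in> Wrep\<close> \<open>coinitial u (M \<inter> qmap u (mk k0))\<close> by blast
qed

lemma covers_if_meets_coinitial_classes:
  assumes "is_complement M W"
    and meets: "\<And>m. m \<in> M \<Longrightarrow> coinitial u (M \<inter> qmap u m) \<Longrightarrow> \<exists>m'\<in>MM. m' - m \<in> lat u"
  shows "qmap u ` (MM + Wrep) = range (qmap u)"
proof (intro equalityI subsetI)
  fix X assume "X \<in> range (qmap u)"
  then obtain c where c: "X = qmap u c" by blast
  obtain m w' where "m \<in> M" "w' \<in> Wrep" "coinitial u (M \<inter> qmap u m)" "c - m - w' \<in> lat u"
    using complement_coinitial_class[OF assms(1)] by blast
  then obtain m' where "m' \<in> MM" "m' - m \<in> lat u"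
    using meets by blast
  have "(c - m - w') - (m' - m) \<in> lat u"
    using \<open>c - m - w' \<in> lat u\<close> \<open>m' - m \<in> lat u\<close> by (rule lat_diff)
  then have "X = qmap u (m' + w')"
    using c by (simp add: qmap_eq_iff algebra_simps)
  moreover have "m' + w' \<in> MM + Wrep"
    using \<open>m' \<in> MM\<close> \<open>w' \<in> Wrep\<close> by (rule set_plus_intro)
  ultimately show "X \<in> qmap u ` (MM + Wrep)" by blast
qed blast

end

definition admissible_reps :: "('d::finite \<Rightarrow> int^'d) \<Rightarrow> (int^'d) set \<Rightarrow> (int^'d) set \<Rightarrow> bool" where
  "admissible_reps u W MM \<longleftrightarrow> finite MM \<and> MM \<noteq> {} \<and> inj_on (qmap u) MM \<and>
    qmap u ` (MM + (Wcal u W \<union> Wscr1 u W)) = range (qmap u) \<and>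
    (\<forall>m\<in>MM. \<exists>w\<in>Wscr1 u W. \<forall>m'\<in>MM - {m}. \<forall>w'\<in>Wcal u W \<union> Wscr1 u W.
      (m + w) - (m' + w') \<notin> lat u)"

locale singleton_Wscr1 = eventually_periodic_set u W
  for u :: "'d::finite \<Rightarrow> int^'d" and W +
  fixes s :: "int^'d"
  assumes Wscr1_eq: "Wscr1 u W = {s}"
begin

lemma congruent_s_eq:
  assumes "w \<in> W" "w - s \<in> lat u"
  shows "w = s"
proof -
  have s: "s \<in> Wscr u W" "\<forall>w'\<in>Wcal u W. s - w' \<notin> lat u"
    using Wscr1_eq unfolding Wscr1_def by auto
  have "w - w' \<notin> lat u" if "w' \<in> Wcal u W" for w'
  proof
    assume "w - w' \<in> lat u"
    have "s - w' = (w - w') - (w - s)" by simp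
    also have "\<dots> \<in> lat u"
      using \<open>w - w' \<in> lat u\<close> assms(2) by (rule lat_diff)
    finally have "s - w' \<in> lat u" .
    with s that show False by blast
  qed
  moreover have "w \<in> Wscr u W"
    using exists_Wcal_below[OF assms(1)] calculation pcone_subset_lat by blast
  ultimately have "w \<in> Wscr1 u W"
    unfolding Wscr1_def by blast
  then show ?thesis
    using Wscr1_eq by simp
qed

lemma sole_summand_in_coinitial_class:
  assumes "coinitial u (M \<inter> qmap u z)" "m \<in> M \<inter> qmap u z" "sole_summand M W m x"
  shows "x = m + s"
proof -
  have "x - m \<in> W"
    using assms(3) unfolding sole_summand_def by blast
  then obtain w' where "w' \<in> Wrep" "x - m - w' \<in> lat u"
    using exists_congruent_rep by blast
  show ?thesis
  proof (cases "w' \<in> Wscr1 u W")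
    case True
    then have "x - m = s"
      using congruent_s_eq \<open>x - m \<in> W\<close> \<open>x - m - w' \<in> lat u\<close> Wscr1_eq by auto
    then show ?thesis by (simp add: algebra_simps)
  next
    case False
    have "m - z \<in> lat u"
      using assms(2) by (simp add: mem_qmap_iff)
    have "x - w' - z = (x - m - w') + (m - z)" by simp
    also have "\<dots> \<in> lat u"
      using \<open>x - m - w' \<in> lat u\<close> \<open>m - z \<in> lat u\<close> by (rule lat_add)
    finally obtain m' where "m' \<in> M" "m' \<noteq> m" "x - m' \<in> W"
      using exists_other_summand[OF _ assms(1), of w' x m] False \<open>w' \<in> Wrep\<close> by blast
    with assms(3) show ?thesis
      unfolding sole_summand_def by blast
  qed
qed

lemma minimal_complement_class_rep:
  assumes M: "is_minimal_complement M W" and cls: "coinitial u (M \<inter> qmap u z)"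
  shows "\<exists>m\<in>M. qmap u m = qmap u z \<and> sole_summand M W m (m + s)"
proof -
  obtain m where m: "m \<in> M \<inter> qmap u z"
    using cls unfolding coinitial_def by blast
  obtain m' where "m' \<in> M \<inter> qmap u z" "m' \<noteq> m"
    using coinitial_other[OF cls] by blast
  then obtain x where "sole_summand M W m x"
    using minimal_complement_sole_summand[OF M] m by blast
  moreover have "x = m + s"
    using sole_summand_in_coinitial_class[OF cls m] calculation .
  ultimately show ?thesis
    using m by (auto simp: mem_qmap_iff qmap_eq_iff)
qed

lemma sole_summand_separates:
  assumes sole: "sole_summand M W m (m + s)" and cls: "coinitial u (M \<inter> qmap u m')"
    and "qmap u m \<noteq> qmap u m'" and "w' \<in> Wrep"
  shows "(m + s) - (m' + w') \<notin> lat u"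
proof
  assume L: "(m + s) - (m' + w') \<in> lat u"
  show False
  proof (cases "w' \<in> Wscr1 u W")
    case True
    with L Wscr1_eq have "m - m' \<in> lat u" by simp
    with \<open>qmap u m \<noteq> qmap u m'\<close> show False
      by (simp add: qmap_eq_iff)
  next
    case False
    have "(m + s) - w' - m' \<in> lat u"
      using L by (simp add: algebra_simps)
    then obtain m'' where "m'' \<in> M" "m'' \<noteq> m" "(m + s) - m'' \<in> W"
      using exists_other_summand[OF _ cls, of w' "m + s" m] False \<open>w' \<in> Wrep\<close> by blast
    with sole show False
      unfolding sole_summand_def by blast
  qed
qed

lemma minimal_complement_imp_admissible_reps:
  assumes M: "is_minimal_complement M W"
  shows "\<exists>MM. admissible_reps u W MM"
proof -
  define Cls where "Cls = {A \<in> range (qmap u). coinitial u (M \<inter> A)}"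
  have "\<exists>m\<in>M. qmap u m = A \<and> sole_summand M W m (m + s)" if "A \<in> Cls" for A
    using that minimal_complement_class_rep[OF M] unfolding Cls_def by blast
  then obtain rep where rep: "\<And>A. A \<in> Cls \<Longrightarrow> rep A \<in> M"
    "\<And>A. A \<in> Cls \<Longrightarrow> sole_summand M W (rep A) (rep A + s)"
    and qmap_rep: "\<And>A. A \<in> Cls \<Longrightarrow> qmap u (rep A) = A"
    by metis
  define MM where "MM = rep ` Cls"
  have "finite Cls"
    unfolding Cls_def by (rule finite_subset[OF _ finite_range_qmap]) blast
  then have "finite MM"
    unfolding MM_def by simp
  moreover have "inj_on (qmap u) MM"
    unfolding MM_def by (rule inj_on_imageI2[of "rep"]) (simp add: inj_on_def qmap_rep)
  moreover have cover: "qmap u ` (MM + Wrep) = range (qmap u)"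
  proof (rule covers_if_meets_coinitial_classes)
    show "is_complement M W"
      using M unfolding is_minimal_complement_def by blast
  next
    fix m assume "m \<in> M" "coinitial u (M \<inter> qmap u m)"
    then have "qmap u m \<in> Cls"
      unfolding Cls_def by blast
    from qmap_rep[OF this] have "rep (qmap u m) - m \<in> lat u"
      unfolding qmap_eq_iff .
    with \<open>qmap u m \<in> Cls\<close> show "\<exists>m'\<in>MM. m' - m \<in> lat u"
      unfolding MM_def by blast
  qed
  moreover have "MM \<noteq> {}"
    using cover unfolding set_plus_def by blast
  moreover have "\<forall>m'\<in>MM - {m}. \<forall>w'\<in>Wrep. (m + s) - (m' + w') \<notin> lat u" if "m \<in> MM" for m
  proof (intro ballI)
    fix m' w' assume "m' \<in> MM - {m}" "w' \<in> Wrep"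
    then obtain A A' where "A \<in> Cls" "A' \<in> Cls" "m = rep A" "m' = rep A'" "A \<noteq> A'"
      using \<open>m \<in> MM\<close> unfolding MM_def by blast
    then have "sole_summand M W m (m + s)" "coinitial u (M \<inter> qmap u m')"
      "qmap u m \<noteq> qmap u m'"
      using rep qmap_rep by (auto simp: Cls_def)
    then show "(m + s) - (m' + w') \<notin> lat u"
      using \<open>w' \<in> Wrep\<close> by (rule sole_summand_separates)
  qed
  ultimately show ?thesis
    unfolding admissible_reps_def using Wscr1_eq by (intro exI[of _ MM]) simp
qed

lemma sole_summand_lat_translate:
  assumes sep: "\<forall>m\<in>MM. \<forall>m'\<in>MM - {m}. \<forall>w'\<in>Wrep. (m + s) - (m' + w') \<notin> lat u"
    and "x \<in> MM + lat u"
  shows "sole_summand (MM + lat u) W x (x + s)"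
proof -
  obtain m l where "m \<in> MM" "l \<in> lat u" "x = m + l"
    using \<open>x \<in> MM + lat u\<close> unfolding set_plus_def by blast
  have "a = x" if "a \<in> MM + lat u" "x + s - a \<in> W" for a
  proof -
    obtain m1 l1 where "m1 \<in> MM" "l1 \<in> lat u" "a = m1 + l1"
      using \<open>a \<in> MM + lat u\<close> unfolding set_plus_def by blast
    obtain w' where "w' \<in> Wrep" "(x + s - a) - w' \<in> lat u"
      using exists_congruent_rep[OF \<open>x + s - a \<in> W\<close>] by blast
    have "(m + s) - (m1 + w') = ((x + s - a) - w') + (l1 - l)"
      using \<open>x = m + l\<close> \<open>a = m1 + l1\<close> by (simp add: algebra_simps)
    also have "\<dots> \<in> lat u"
      using \<open>(x + s - a) - w' \<in> lat u\<close> lat_diff[OF \<open>l1 \<in> lat u\<close> \<open>l \<in> lat u\<close>]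
      by (rule lat_add)
    finally have "m1 = m"
      using sep \<open>m \<in> MM\<close> \<open>m1 \<in> MM\<close> \<open>w' \<in> Wrep\<close> by blast
    then have "(x + s - a) - s = l - l1"
      using \<open>x = m + l\<close> \<open>a = m1 + l1\<close> by (simp add: algebra_simps)
    then have "(x + s - a) - s \<in> lat u"
      using lat_diff[OF \<open>l \<in> lat u\<close> \<open>l1 \<in> lat u\<close>] by simp
    then have "x + s - a = s"
      using congruent_s_eq[OF \<open>x + s - a \<in> W\<close>] by blast
    then show "a = x" by simp
  qed
  moreover have "s \<in> W"
    using Wscr1_eq unfolding Wscr1_def Wscr_def by blast
  ultimately show ?thesis
    unfolding sole_summand_def by auto
qed

lemma admissible_reps_imp_minimal_complement:
  assumes "admissible_reps u W MM"
  shows "is_minimal_complement (MM + lat u) W"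
proof -
  have "MM \<noteq> {}" and cover: "qmap u ` (MM + Wrep) = range (qmap u)"
    and sep: "\<forall>m\<in>MM. \<forall>m'\<in>MM - {m}. \<forall>w'\<in>Wrep. (m + s) - (m' + w') \<notin> lat u"
    using assms unfolding admissible_reps_def by (simp_all add: Wscr1_eq)
  have "(MM + lat u) + W = UNIV"
  proof (intro equalityI subsetI UNIV_I)
    fix z
    have "qmap u z \<in> qmap u ` (MM + Wrep)"
      using cover by auto
    then obtain y where "y \<in> MM + Wrep" "qmap u z = qmap u y"
      by blast
    then obtain m w' where "m \<in> MM" "w' \<in> Wrep" "z - (m + w') \<in> lat u"
      unfolding set_plus_def by (auto simp: qmap_eq_iff)
    have "m + (z - (m + w')) \<in> MM + lat u"
      using \<open>m \<in> MM\<close> \<open>z - (m + w') \<in> lat u\<close> by (rule set_plus_intro)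
    moreover have "w' \<in> W"
      using Wrep_subset \<open>w' \<in> Wrep\<close> by blast
    ultimately have "(m + (z - (m + w'))) + w' \<in> (MM + lat u) + W"
      by (rule set_plus_intro)
    then show "z \<in> (MM + lat u) + W" by simp
  qed
  moreover have "MM + lat u \<noteq> {}"
    using \<open>MM \<noteq> {}\<close> lat_zero unfolding set_plus_def by blast
  ultimately have "is_complement (MM + lat u) W"
    unfolding is_complement_def by blast
  moreover have "\<forall>x\<in>MM + lat u. \<exists>y. sole_summand (MM + lat u) W x y"
    using sole_summand_lat_translate[OF sep] by blast
  ultimately show ?thesis
    by (rule minimal_complement_if_sole_summands)
qed

end

theorem theorem4p23:
  fixes u :: "'d::finite \<Rightarrow> int^'d" and W :: "(int^'d) set"
  assumes "no_int_relation u"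
    and "eventually_periodic u W"
    and "card (Wscr1 u W) = 1"
  shows "(\<exists>M. is_minimal_complement M W) \<longleftrightarrow>
    (\<exists>\<M>. finite \<M> \<and> \<M> \<noteq> {} \<and>
       inj_on (qmap u) \<M> \<and>
       qmap u ` (\<M> + (Wcal u W \<union> Wscr1 u W)) = range (qmap u) \<and>
       (\<forall>m\<in>\<M>. \<exists>w\<in>Wscr1 u W. \<forall>m'\<in>\<M> - {m}. \<forall>w'\<in>Wcal u W \<union> Wscr1 u W.
           (m + w) - (m' + w') \<notin> lat u))"
proof -
  obtain s where "Wscr1 u W = {s}"
    using assms(3) by (rule card_1_singletonE)
  with assms(1,2) interpret singleton_Wscr1 u W s
    by unfold_locales
  have "(\<exists>M. is_minimal_complement M W) \<longleftrightarrow> (\<exists>\<M>. admissible_reps u W \<M>)"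
    using minimal_complement_imp_admissible_reps admissible_reps_imp_minimal_complement by blast
  then show ?thesis
    unfolding admissible_reps_def .
qed

end
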